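(* Let $S$ be a closed orientable surface, $f\in\mathrm{Diff}(S)_0$, $S_2$ a (connected) two-fold cover of $S$, and $f_2\in\mathrm{Diff}(S_2)_0$ a lift of $f$. If $f$ is a distortion element of a finitely generated subgroup $G$ of $\mathrm{Diff}(S)_0$, then $f_2$ is a distortion element of some finitely generated subgroup $G_2$ of $\mathrm{Diff}(S_2)_0$.
   Context: $\mathrm{Diff}(S)_0$ is the identity component of the group of $C^1$ diffeomorphisms of $S$. For a finitely generated group with finite generating set, $f$ is a distortion element if it has infinite order and $\liminf_{n\to\infty}|f^n|/n=0$, $|\cdot|$ the word length. *)

theory Defs
  imports "HOL-Analysis.Analysis"
begin

text \<open>Closed orientable surfaces are modelled as compact connected C1 embedded
 2-dimensional submanifolds of R^3 (every closed orientable surface arises this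
 way, and every compact embedded surface in R^3 is orientable).\<close>

type_synonym pt = "real^3"

definition C1_on :: "('a::euclidean_space \<Rightarrow> 'b::euclidean_space) \<Rightarrow> 'a set \<Rightarrow> bool" where
  "C1_on g U \<longleftrightarrow> (\<exists>g'. (\<forall>x\<in>U. (g has_derivative blinfun_apply (g' x)) (at x))
                         \<and> continuous_on U g')"

definition chart :: "pt set \<Rightarrow> ((real^2) \<Rightarrow> pt) \<Rightarrow> ((real^2) \<Rightarrow> ((real^2) \<Rightarrow>\<^sub>L pt)) \<Rightarrow> (real^2) set \<Rightarrow> bool" where
  "chart S \<phi> \<phi>' V \<longleftrightarrow> open V \<and>
     (\<forall>v\<in>V. (\<phi> has_derivative blinfun_apply (\<phi>' v)) (at v)) \<and> continuous_on V \<phi>' \<and>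
     (\<forall>v\<in>V. inj (blinfun_apply (\<phi>' v))) \<and>
     \<phi> ` V \<subseteq> S \<and> openin (top_of_set S) (\<phi> ` V) \<and>
     (\<exists>\<psi>. homeomorphism V (\<phi> ` V) \<phi> \<psi>)"

definition closed_surface :: "pt set \<Rightarrow> bool" where
  "closed_surface S \<longleftrightarrow> compact S \<and> connected S \<and> S \<noteq> {} \<and>
     (\<forall>x\<in>S. \<exists>\<phi> \<phi>' V. chart S \<phi> \<phi>' V \<and> x \<in> \<phi> ` V)"

definition C1_map :: "pt set \<Rightarrow> pt set \<Rightarrow> (pt \<Rightarrow> pt) \<Rightarrow> bool" where
  "C1_map A B f \<longleftrightarrow> f ` A \<subseteq> B \<and>
     (\<forall>x\<in>A. \<exists>U g. open U \<and> x \<in> U \<and> C1_on g U \<and> (\<forall>y\<in>A \<inter> U. g y = f y))"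

definition dinv :: "pt set \<Rightarrow> (pt \<Rightarrow> pt) \<Rightarrow> (pt \<Rightarrow> pt)" where
  "dinv S f = (\<lambda>x. if x \<in> S then inv_into S f x else x)"

text \<open>Diff(S): C1 diffeomorphisms of S (represented as maps of R^3 that are the
 identity off S, so that the group operation is composition with unit id).\<close>
definition Diff :: "pt set \<Rightarrow> (pt \<Rightarrow> pt) set" where
  "Diff S = {f. bij_betw f S S \<and> C1_map S S f \<and> C1_map S S (inv_into S f)
               \<and> (\<forall>x. x \<notin> S \<longrightarrow> f x = x)}"

text \<open>A C1 isotopy: a path t in [0,1] to H t in Diff(S) that is continuous for the
 C1 topology, i.e. H and its derivative along S (computed in charts) are jointly
 continuous in (t,x).\<close>
definition C1_isotopy :: "pt set \<Rightarrow> (real \<Rightarrow> pt \<Rightarrow> pt) \<Rightarrow> bool" where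
  "C1_isotopy S H \<longleftrightarrow>
     (\<forall>t\<in>{0..1}. H t \<in> Diff S) \<and>
     continuous_on ({0..1} \<times> S) (\<lambda>(t,x). H t x) \<and>
     (\<forall>\<phi> \<phi>' V. chart S \<phi> \<phi>' V \<longrightarrow>
        (\<exists>D :: real \<times> (real^2) \<Rightarrow> ((real^2) \<Rightarrow>\<^sub>L pt).
           continuous_on ({0..1} \<times> V) D \<and>
           (\<forall>t\<in>{0..1}. \<forall>v\<in>V. ((\<lambda>w. H t (\<phi> w)) has_derivative blinfun_apply (D (t,v))) (at v))))"

text \<open>Diff(S)_0: identity component (= path component of the identity) of Diff(S).\<close>
definition Diff0 :: "pt set \<Rightarrow> (pt \<Rightarrow> pt) set" where
  "Diff0 S = {f \<in> Diff S. \<exists>H. C1_isotopy S H \<and> H 0 = id \<and> H 1 = f}"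

text \<open>Words over a generating set A: letters (True,g) = g, (False,g) = g^{-1}.\<close>
definition word_eval :: "pt set \<Rightarrow> (bool \<times> (pt \<Rightarrow> pt)) list \<Rightarrow> (pt \<Rightarrow> pt)" where
  "word_eval S w = foldr (\<lambda>(b,g) h. (if b then g else dinv S g) \<circ> h) w id"

definition gen_group :: "pt set \<Rightarrow> (pt \<Rightarrow> pt) set \<Rightarrow> (pt \<Rightarrow> pt) set" where
  "gen_group S A = {word_eval S w | w. set (map snd w) \<subseteq> A}"

definition word_length :: "pt set \<Rightarrow> (pt \<Rightarrow> pt) set \<Rightarrow> (pt \<Rightarrow> pt) \<Rightarrow> nat" where
  "word_length S A f = (LEAST n. \<exists>w. length w = n \<and> set (map snd w) \<subseteq> A \<and> word_eval S w = f)"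

definition distortion_element :: "pt set \<Rightarrow> (pt \<Rightarrow> pt) set \<Rightarrow> (pt \<Rightarrow> pt) \<Rightarrow> bool" where
  "distortion_element S A f \<longleftrightarrow> finite A \<and> f \<in> gen_group S A \<and>
     (\<forall>n>0. (f ^^ n) \<noteq> id) \<and>
     liminf (\<lambda>n. ereal (real (word_length S A (f ^^ n)) / real n)) = 0"

definition two_fold_cover :: "pt set \<Rightarrow> pt set \<Rightarrow> (pt \<Rightarrow> pt) \<Rightarrow> bool" where
  "two_fold_cover S2 S p \<longleftrightarrow> covering_space S2 p S \<and> C1_map S2 S p \<and>
     (\<forall>x\<in>S2. \<exists>W. openin (top_of_set S2) W \<and> x \<in> W \<and> inj_on p W \<and>
         openin (top_of_set S) (p ` W) \<and> C1_map (p ` W) S2 (inv_into W p)) \<and>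
     (\<forall>y\<in>S. card {x\<in>S2. p x = y} = 2)"

end

theory Submission
  imports Defs
begin

text \<open>
  Every generator g of the distorting group is isotopic to the identity, and lifting the isotopy
  through the covering yields a lift of g in Diff(S2)_0; let G2 be generated by these lifts and f2.
  A shortest word for f^n lifts letter by letter to a word of the same length whose value L_n is a
  lift of f^n. Two lifts of the same map on the connected cover either coincide or differ by the
  nontrivial deck transformation tau. If some L_n0 differs from f2^n0, then
  tau = f2^n0 \<circ> L_n0^-1 lies in G2; so in all cases |f2^n| \<le> |f^n| + |tau|, and f2 is
  distorted. Finally f2^n = id would force f^n = id, since p is onto.
\<close>

section \<open>C1 maps between subsets of space\<close>

definition C1_at :: "pt set \<Rightarrow> (pt \<Rightarrow> pt) \<Rightarrow> pt \<Rightarrow> bool" where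
  "C1_at A F x \<longleftrightarrow> (\<exists>U g. open U \<and> x \<in> U \<and> C1_on g U \<and> (\<forall>y\<in>A \<inter> U. g y = F y))"

lemma C1_map_iff: "C1_map A B F \<longleftrightarrow> F ` A \<subseteq> B \<and> (\<forall>x\<in>A. C1_at A F x)"
  unfolding C1_map_def C1_at_def by blast

lemma C1_on_imp_continuous_on:
  assumes "C1_on g U" shows "continuous_on U g"
proof -
  from assms obtain g' where "\<forall>x\<in>U. (g has_derivative blinfun_apply (g' x)) (at x)"
    unfolding C1_on_def by blast
  then show ?thesis by (meson continuous_at_imp_continuous_on has_derivative_continuous)
qed

lemma C1_on_subset:
  assumes "C1_on g U" "U' \<subseteq> U" shows "C1_on g U'"
proof -
  obtain g' where "\<forall>x\<in>U. (g has_derivative blinfun_apply (g' x)) (at x)" "continuous_on U g'"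
    using assms(1) unfolding C1_on_def by blast
  then show ?thesis
    unfolding C1_on_def using assms(2) by (intro exI[of _ g']) (auto intro: continuous_on_subset)
qed

lemma C1_on_compose:
  assumes "C1_on g1 U1" "C1_on g2 U2"
  shows "C1_on (g2 \<circ> g1) (U1 \<inter> g1 -` U2)"
proof -
  from assms(1) obtain g1' where d1: "\<forall>x\<in>U1. (g1 has_derivative blinfun_apply (g1' x)) (at x)"
    and c1: "continuous_on U1 g1'" unfolding C1_on_def by blast
  from assms(2) obtain g2' where d2: "\<forall>x\<in>U2. (g2 has_derivative blinfun_apply (g2' x)) (at x)"
    and c2: "continuous_on U2 g2'" unfolding C1_on_def by blast
  have cg1: "continuous_on U1 g1" using C1_on_imp_continuous_on[OF assms(1)] .
  show ?thesis unfolding C1_on_def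
  proof (intro exI conjI ballI)
    fix x assume x: "x \<in> U1 \<inter> g1 -` U2"
    show "((g2 \<circ> g1) has_derivative blinfun_apply (g2' (g1 x) o\<^sub>L g1' x)) (at x)"
      using has_derivative_compose[OF d1[rule_format, of x] d2[rule_format, of "g1 x"]] x
      by (simp add: o_def blinfun_compose.rep_eq)
  next
    have "continuous_on (U1 \<inter> g1 -` U2) (g2' \<circ> g1)"
      by (rule continuous_on_compose)
        (auto intro: continuous_on_subset[OF cg1] continuous_on_subset[OF c2])
    moreover have "continuous_on (U1 \<inter> g1 -` U2) g1'" using c1 by (rule continuous_on_subset) auto
    ultimately show "continuous_on (U1 \<inter> g1 -` U2) (\<lambda>x. g2' (g1 x) o\<^sub>L g1' x)"
      unfolding o_def by (intro continuous_intros)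
  qed
qed

lemma C1_at_compose:
  assumes "C1_at A f x" "C1_at B g (f x)" "f ` A \<subseteq> B" "x \<in> A"
  shows "C1_at A (g \<circ> f) x"
proof -
  obtain U1 g1 where U1: "open U1" "x \<in> U1" "C1_on g1 U1" "\<forall>y\<in>A \<inter> U1. g1 y = f y"
    using assms(1) unfolding C1_at_def by blast
  obtain U2 g2 where U2: "open U2" "f x \<in> U2" "C1_on g2 U2" "\<forall>y\<in>B \<inter> U2. g2 y = g y"
    using assms(2) unfolding C1_at_def by blast
  have "open (g1 -` U2 \<inter> U1)"
    using continuous_on_open_vimage[OF U1(1)] C1_on_imp_continuous_on[OF U1(3)] U2(1) by blast
  then have "open (U1 \<inter> g1 -` U2)" by (simp add: Int_commute)
  moreover have "x \<in> U1 \<inter> g1 -` U2" using U1 U2 assms(4) by auto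
  moreover have "\<forall>y\<in>A \<inter> (U1 \<inter> g1 -` U2). (g2 \<circ> g1) y = (g \<circ> f) y"
    using U1 U2 assms(3) by auto
  ultimately show ?thesis
    unfolding C1_at_def using C1_on_compose[OF U1(3) U2(3)] by (intro exI conjI) assumption+
qed

lemma C1_at_subset: "C1_at A F x \<Longrightarrow> A' \<subseteq> A \<Longrightarrow> C1_at A' F x"
  unfolding C1_at_def by blast

lemma C1_at_transform_open:
  assumes "C1_at (A \<inter> Q) G x" "open Q" "x \<in> Q" "\<forall>y\<in>A \<inter> Q. G y = F y"
  shows "C1_at A F x"
proof -
  obtain U g where U: "open U" "x \<in> U" "C1_on g U" "\<forall>y\<in>(A \<inter> Q) \<inter> U. g y = G y"
    using assms(1) unfolding C1_at_def by blast
  have "C1_on g (U \<inter> Q)" using U(3) by (rule C1_on_subset) blast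
  moreover have "\<forall>y\<in>A \<inter> (U \<inter> Q). g y = F y" using U(4) assms(4) by auto
  ultimately show ?thesis unfolding C1_at_def using U(1,2) assms(2,3)
    by (intro exI[of _ "U \<inter> Q"] exI[of _ g]) auto
qed

lemma C1_at_imp_continuous_within:
  assumes "C1_at A F x" "x \<in> A" shows "continuous (at x within A) F"
proof -
  obtain U g where U: "open U" "x \<in> U" "C1_on g U" "\<forall>y\<in>A \<inter> U. g y = F y"
    using assms(1) unfolding C1_at_def by blast
  have "isCont g x"
    using C1_on_imp_continuous_on[OF U(3)] U(1,2) by (simp add: continuous_on_eq_continuous_at)
  then have "continuous (at x within A) g" by (rule continuous_at_imp_continuous_within)
  moreover have "openin (top_of_set A) (A \<inter> U)" using U(1) by (simp add: openin_open_Int)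
  ultimately show ?thesis
    by (rule continuous_transform_within_openin) (use U(2,4) assms(2) in auto)
qed

lemma C1_map_imp_continuous_on: "C1_map A B F \<Longrightarrow> continuous_on A F"
  unfolding C1_map_iff continuous_on_eq_continuous_within
  by (auto intro: C1_at_imp_continuous_within)

lemma C1_map_cong:
  assumes "\<And>x. x \<in> A \<Longrightarrow> f x = g x" shows "C1_map A B f \<longleftrightarrow> C1_map A B g"
proof -
  have "f ` A = g ` A" by (rule image_cong[OF refl assms])
  moreover have "\<And>U h. (\<forall>y\<in>A \<inter> U. h y = f y) \<longleftrightarrow> (\<forall>y\<in>A \<inter> U. h y = g y)"
    using assms by auto
  ultimately show ?thesis by (simp only: C1_map_def)
qed

section \<open>Words and word length\<close>

lemma permutes_eqI: "p permutes S \<Longrightarrow> q permutes S \<Longrightarrow> (\<And>x. x \<in> S \<Longrightarrow> p x = q x) \<Longrightarrow> p = q"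
  by (metis permutes_not_in ext)

lemma Diff_permutes: "g \<in> Diff S \<Longrightarrow> g permutes S"
  unfolding Diff_def by (auto intro: bij_imp_permutes)

lemma permutes_inv_into_eq_inv:
  assumes "g permutes S" "x \<in> S" shows "inv_into S g x = inv g x"
proof -
  have "g (inv_into S g x) = x" using permutes_image[OF assms(1)] assms(2) by (simp add: f_inv_into_f)
  then show ?thesis using permutes_inv_eq[OF assms(1)] by metis
qed

lemma dinv_eq_inv:
  assumes "g permutes S" shows "dinv S g = inv g"
proof
  fix x show "dinv S g x = inv g x"
    using permutes_inv_into_eq_inv[OF assms] permutes_inv_eq[OF assms, of x x]
      permutes_not_in[OF assms, of x]
    unfolding dinv_def by metis
qed

lemma Diff_imp_continuous_on: "g \<in> Diff S \<Longrightarrow> continuous_on S g"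
  unfolding Diff_def using C1_map_imp_continuous_on by blast

lemma Diff_imp_continuous_on_inv:
  assumes "g \<in> Diff S" shows "continuous_on S (inv g)"
proof -
  have "continuous_on S (inv_into S g)"
    using assms unfolding Diff_def using C1_map_imp_continuous_on by blast
  then show ?thesis
    using dinv_eq_inv[OF Diff_permutes[OF assms]] by (metis (no_types, lifting) continuous_on_cong dinv_def)
qed

lemma word_eval_Nil [simp]: "word_eval S [] = id"
  by (simp add: word_eval_def)

definition letter_eval :: "pt set \<Rightarrow> bool \<Rightarrow> (pt \<Rightarrow> pt) \<Rightarrow> (pt \<Rightarrow> pt)" where
  "letter_eval S b g = (if b then g else dinv S g)"

lemma word_eval_Cons [simp]: "word_eval S ((b, g) # w) = letter_eval S b g \<circ> word_eval S w"
  by (simp add: word_eval_def letter_eval_def)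

lemma letter_eval_permutes: "g permutes S \<Longrightarrow> letter_eval S b g permutes S"
  by (simp add: letter_eval_def dinv_eq_inv permutes_inv)

lemma letter_eval_negate: "g permutes S \<Longrightarrow> letter_eval S (\<not> b) g = inv (letter_eval S b g)"
  by (simp add: letter_eval_def dinv_eq_inv permutes_inv_inv)

lemma word_eval_append: "word_eval S (v @ w) = word_eval S v \<circ> word_eval S w"
  by (induction v) (auto simp: word_eval_def)

definition word_inv :: "(bool \<times> 'a) list \<Rightarrow> (bool \<times> 'a) list" where
  "word_inv w = rev (map (\<lambda>(b, g). (\<not> b, g)) w)"

lemma word_inv_Cons: "word_inv ((b, g) # w) = word_inv w @ [(\<not> b, g)]"
  by (simp add: word_inv_def)

lemma letters_word_inv [simp]: "set (map snd (word_inv w)) = set (map snd w)"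
  by (force simp: word_inv_def)

lemma word_eval_permutes:
  assumes "set (map snd w) \<subseteq> A" "\<forall>g\<in>A. g permutes S"
  shows "word_eval S w permutes S"
  using assms(1)
proof (induction w)
  case (Cons a w)
  obtain b g where "a = (b, g)" by fastforce
  then have "word_eval S w permutes S" "letter_eval S b g permutes S"
    using Cons assms(2) by (auto intro: letter_eval_permutes)
  then show ?case unfolding \<open>a = (b, g)\<close> word_eval_Cons by (rule permutes_compose)
qed simp

lemma word_eval_word_inv:
  assumes "set (map snd w) \<subseteq> A" "\<forall>g\<in>A. g permutes S"
  shows "word_eval S (word_inv w) = inv (word_eval S w)"
  using assms(1)
proof (induction w)
  case Nil
  show ?case by (simp add: word_inv_def)
next
  case (Cons a w)
  obtain b g where a: "a = (b, g)" by fastforce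
  have g: "g permutes S" and w: "set (map snd w) \<subseteq> A" using Cons.prems a assms(2) by auto
  have "bij (word_eval S w)" "bij (letter_eval S b g)"
    using word_eval_permutes[OF w assms(2)] letter_eval_permutes[OF g] by (auto intro: permutes_bij)
  have "word_eval S (word_inv (a # w)) = word_eval S (word_inv w) \<circ> letter_eval S (\<not> b) g"
    by (simp add: a word_inv_Cons word_eval_append)
  also have "\<dots> = inv (word_eval S w) \<circ> inv (letter_eval S b g)"
    using Cons.IH[OF w] letter_eval_negate[OF g] by simp
  also have "\<dots> = inv (word_eval S (a # w))"
    using o_inv_distrib[OF \<open>bij (letter_eval S b g)\<close> \<open>bij (word_eval S w)\<close>] by (simp add: a)
  finally show ?case .
qed

lemma word_eval_replicate: "word_eval S (concat (replicate n w)) = word_eval S w ^^ n"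
  by (induction n) (auto simp: word_eval_append)

lemma word_eval_continuous_on:
  assumes "set (map snd w) \<subseteq> A" "A \<subseteq> Diff S"
  shows "continuous_on S (word_eval S w)"
  using assms(1)
proof (induction w)
  case Nil
  show ?case by (simp add: continuous_on_id)
next
  case (Cons a w)
  obtain b g where a: "a = (b, g)" by fastforce
  have g: "g \<in> Diff S" and w: "set (map snd w) \<subseteq> A" using Cons.prems a assms(2) by auto
  have "continuous_on S (letter_eval S b g)"
    using Diff_imp_continuous_on[OF g] Diff_imp_continuous_on_inv[OF g]
    by (simp add: letter_eval_def dinv_eq_inv[OF Diff_permutes[OF g]])
  moreover have "word_eval S w ` S \<subseteq> S"
    using word_eval_permutes[OF w] assms(2) Diff_permutes permutes_image by blast
  ultimately have "continuous_on S (letter_eval S b g \<circ> word_eval S w)"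
    using Cons.IH[OF w] by (intro continuous_on_compose) (auto intro: continuous_on_subset)
  then show ?case by (simp add: a)
qed

lemma gen_groupI: "set (map snd w) \<subseteq> A \<Longrightarrow> word_eval S w \<in> gen_group S A"
  unfolding gen_group_def by blast

lemma gen_groupE:
  assumes "F \<in> gen_group S A"
  obtains w where "set (map snd w) \<subseteq> A" "F = word_eval S w"
  using assms unfolding gen_group_def by blast

lemma gen_group_generator: "g \<in> A \<Longrightarrow> g \<in> gen_group S A"
  using gen_groupI[of "[(True, g)]" A S] by (simp add: letter_eval_def)

lemma gen_group_comp:
  assumes "F \<in> gen_group S A" "G \<in> gen_group S A" shows "F \<circ> G \<in> gen_group S A"
proof -
  obtain v w where "set (map snd v) \<subseteq> A" "F = word_eval S v"
    and "set (map snd w) \<subseteq> A" "G = word_eval S w"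
    using assms by (elim gen_groupE)
  then show ?thesis using gen_groupI[of "v @ w" A S] by (simp add: word_eval_append)
qed

lemma gen_group_inv:
  assumes "F \<in> gen_group S A" "\<forall>g\<in>A. g permutes S" shows "inv F \<in> gen_group S A"
proof -
  obtain w where w: "set (map snd w) \<subseteq> A" "F = word_eval S w" using assms(1) by (rule gen_groupE)
  then have "set (map snd (word_inv w)) \<subseteq> A" by (simp only: letters_word_inv)
  then have "word_eval S (word_inv w) \<in> gen_group S A" by (rule gen_groupI)
  then show ?thesis using word_eval_word_inv[OF w(1) assms(2)] w(2) by simp
qed

lemma gen_group_funpow:
  assumes "F \<in> gen_group S A" shows "F ^^ n \<in> gen_group S A"
proof -
  obtain w where "set (map snd w) \<subseteq> A" "F = word_eval S w" using assms by (rule gen_groupE)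
  moreover have "set (map snd (concat (replicate n w))) \<subseteq> A" using calculation(1) by (induction n) auto
  ultimately show ?thesis using gen_groupI[of "concat (replicate n w)" A S]
    by (simp only: word_eval_replicate)
qed

lemma gen_group_permutes:
  assumes "F \<in> gen_group S A" "\<forall>g\<in>A. g permutes S" shows "F permutes S"
  using assms(1) by (rule gen_groupE) (simp add: word_eval_permutes[OF _ assms(2)])

lemma gen_group_continuous_on:
  assumes "F \<in> gen_group S A" "A \<subseteq> Diff S" shows "continuous_on S F"
  using assms(1) by (rule gen_groupE) (simp add: word_eval_continuous_on[OF _ assms(2)])

lemma word_length_le:
  "set (map snd w) \<subseteq> A \<Longrightarrow> word_eval S w = F \<Longrightarrow> word_length S A F \<le> length w"
  unfolding word_length_def by (rule Least_le) blast

lemma word_length_obtain: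
  assumes "F \<in> gen_group S A"
  obtains w where "length w = word_length S A F" "set (map snd w) \<subseteq> A" "word_eval S w = F"
proof -
  have "\<exists>n w. length w = n \<and> set (map snd w) \<subseteq> A \<and> word_eval S w = F"
    using assms unfolding gen_group_def by blast
  from LeastI_ex[OF this] show ?thesis using that unfolding word_length_def by blast
qed

lemma word_length_comp_le:
  assumes "F \<in> gen_group S A" "G \<in> gen_group S A"
  shows "word_length S A (F \<circ> G) \<le> word_length S A F + word_length S A G"
proof -
  obtain v where v: "length v = word_length S A F" "set (map snd v) \<subseteq> A" "word_eval S v = F"
    using word_length_obtain[OF assms(1)] .
  obtain w where w: "length w = word_length S A G" "set (map snd w) \<subseteq> A" "word_eval S w = G"
    using word_length_obtain[OF assms(2)] .
  have "word_length S A (F \<circ> G) \<le> length (v @ w)"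
    by (rule word_length_le) (use v w in \<open>auto simp: word_eval_append\<close>)
  then show ?thesis using v(1) w(1) by simp
qed

section \<open>Lifts through a two-fold cover\<close>

lemma two_fold_coverD:
  assumes "two_fold_cover S2 S p"
  shows "covering_space S2 p S" "p ` S2 = S" "continuous_on S2 p" "C1_map S2 S p"
proof -
  show cov: "covering_space S2 p S" using assms unfolding two_fold_cover_def by simp
  show "p ` S2 = S" by (rule covering_space_imp_surjective[OF cov])
  show "continuous_on S2 p" by (rule covering_space_imp_continuous[OF cov])
  show "C1_map S2 S p" using assms unfolding two_fold_cover_def by simp
qed

lemma two_fold_cover_local_section:
  assumes "two_fold_cover S2 S p" "z \<in> S2"
  obtains W OW where "W = S2 \<inter> OW" "open OW" "z \<in> W" "inj_on p W" "openin (top_of_set S) (p ` W)"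
    "C1_map (p ` W) S2 (inv_into W p)"
proof -
  obtain W where W: "openin (top_of_set S2) W" "z \<in> W" "inj_on p W" "openin (top_of_set S) (p ` W)"
    "C1_map (p ` W) S2 (inv_into W p)"
    using assms unfolding two_fold_cover_def by blast
  then obtain OW where "open OW" "W = S2 \<inter> OW" unfolding openin_open by blast
  then show ?thesis using that W by blast
qed

lemma two_fold_cover_C1_local_inverse:
  assumes cov: "two_fold_cover S2 S p" and y: "y \<in> S2"
  obtains OW U g g' where "open OW" "y \<in> OW" "open U" "p y \<in> U"
    "\<forall>x\<in>U. (g has_derivative blinfun_apply (g' x)) (at x)" "continuous_on U g'"
    "\<And>z. z \<in> S2 \<inter> OW \<Longrightarrow> p z \<in> U \<Longrightarrow> g (p z) = z"
proof -
  obtain W OW where W: "W = S2 \<inter> OW" "open OW" "y \<in> W" "inj_on p W"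
    "C1_map (p ` W) S2 (inv_into W p)"
    by (rule two_fold_cover_local_section[OF cov y])
  then obtain U g where U: "open U" "p y \<in> U" "C1_on g U" "\<forall>x\<in>p ` W \<inter> U. g x = inv_into W p x"
    unfolding C1_map_iff C1_at_def by blast
  obtain g' where "\<forall>x\<in>U. (g has_derivative blinfun_apply (g' x)) (at x)" "continuous_on U g'"
    using U(3) unfolding C1_on_def by blast
  moreover have "g (p z) = z" if "z \<in> S2 \<inter> OW" "p z \<in> U" for z
    using U(4) W(1,4) that by (simp add: inv_into_f_f)
  ultimately show ?thesis using that W(1-3) U(1,2) by blast
qed

lemma two_fold_cover_fibre:
  assumes "two_fold_cover S2 S p" "y \<in> S"
  obtains u v where "{x\<in>S2. p x = y} = {u, v}" "u \<noteq> v"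
  using assms unfolding two_fold_cover_def card_2_iff by blast

lemma two_fold_cover_other_point_unique:
  assumes cov: "two_fold_cover S2 S p" and "a \<in> S2" "b \<in> S2" "c \<in> S2"
    and "p b = p a" "p c = p a" "b \<noteq> a" "c \<noteq> a"
  shows "b = c"
proof -
  have "p a \<in> S" using two_fold_coverD(2)[OF cov] assms(2) by blast
  then obtain u v where "{x\<in>S2. p x = p a} = {u, v}"
    by (rule two_fold_cover_fibre[OF cov])
  then have "a \<in> {u, v}" "b \<in> {u, v}" "c \<in> {u, v}" using assms by blast+
  then show ?thesis using assms(7,8) by auto
qed

definition lifts :: "pt set \<Rightarrow> (pt \<Rightarrow> pt) \<Rightarrow> (pt \<Rightarrow> pt) \<Rightarrow> (pt \<Rightarrow> pt) \<Rightarrow> bool" where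
  "lifts S2 p F G \<longleftrightarrow> (\<forall>x\<in>S2. p (F x) = G (p x))"

lemma lifts_comp:
  "lifts S2 p F G \<Longrightarrow> lifts S2 p F' G' \<Longrightarrow> F ` S2 \<subseteq> S2 \<Longrightarrow> lifts S2 p (F' \<circ> F) (G' \<circ> G)"
  unfolding lifts_def by auto

lemma lifts_inv:
  assumes "lifts S2 p F G" "F permutes S2" "G permutes S" "p ` S2 \<subseteq> S"
  shows "lifts S2 p (inv F) (inv G)"
  unfolding lifts_def
proof
  fix y assume y: "y \<in> S2"
  then have "inv F y \<in> S2" using permutes_in_image[OF permutes_inv[OF assms(2)]] by blast
  then have "G (p (inv F y)) = p y"
    using assms(1) permutes_inverses(1)[OF assms(2)] unfolding lifts_def by metis
  then show "p (inv F y) = inv G (p y)" using permutes_inv_eq[OF assms(3)] by metis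
qed

lemma lifts_funpow:
  assumes "lifts S2 p F G" "F ` S2 \<subseteq> S2" shows "lifts S2 p (F ^^ n) (G ^^ n)"
proof (induction n)
  case (Suc n)
  show ?case unfolding funpow_Suc_right by (rule lifts_comp[OF assms(1) Suc.IH assms(2)])
qed (simp add: lifts_def)

lemma lifts_word_eval:
  assumes "\<forall>g\<in>set (map snd w). g permutes S \<and> lf g permutes S2 \<and> lifts S2 p (lf g) g"
    and "p ` S2 \<subseteq> S"
  shows "lifts S2 p (word_eval S2 (map (apsnd lf) w)) (word_eval S w)"
  using assms(1)
proof (induction w)
  case Nil
  show ?case by (simp add: lifts_def)
next
  case (Cons a w)
  obtain b g where a: "a = (b, g)" by fastforce
  have g: "g permutes S" "lf g permutes S2" "lifts S2 p (lf g) g" using Cons.prems a by auto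
  have "lifts S2 p (letter_eval S2 b (lf g)) (letter_eval S b g)"
    using lifts_inv[OF g(3,2,1) assms(2)] g(3)
    by (simp add: letter_eval_def dinv_eq_inv g(1,2))
  moreover have "word_eval S2 (map (apsnd lf) w) ` S2 \<subseteq> S2"
    using Cons.prems word_eval_permutes[of "map (apsnd lf) w" "lf ` snd ` set w" S2] permutes_image
    by force
  ultimately show ?case
    unfolding a list.map apsnd_conv word_eval_Cons using Cons by (intro lifts_comp) auto
qed

lemma gen_group_lift:
  assumes "G \<in> gen_group S A" "\<forall>g\<in>A. lf g \<in> A2 \<and> lifts S2 p (lf g) g"
    and "A \<subseteq> Diff S" "A2 \<subseteq> Diff S2" "p ` S2 \<subseteq> S"
  obtains L where "L \<in> gen_group S2 A2" "lifts S2 p L G"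
    "word_length S2 A2 L \<le> word_length S A G"
proof -
  obtain w where w: "length w = word_length S A G" "set (map snd w) \<subseteq> A" "word_eval S w = G"
    by (rule word_length_obtain[OF assms(1)])
  define L where "L = word_eval S2 (map (apsnd lf) w)"
  have letters: "set (map snd (map (apsnd lf) w)) \<subseteq> A2" using w(2) assms(2) by auto
  have "L \<in> gen_group S2 A2" unfolding L_def gen_group_def using letters by blast
  moreover have "\<forall>g\<in>A. g permutes S \<and> lf g permutes S2 \<and> lifts S2 p (lf g) g"
    using assms(2-4) Diff_permutes by blast
  then have "lifts S2 p L G"
    unfolding L_def w(3)[symmetric] using w(2) assms(5) by (intro lifts_word_eval) auto
  moreover have "word_length S2 A2 L \<le> word_length S A G"
    using word_length_le[OF letters] w(1) unfolding L_def by simp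
  ultimately show ?thesis using that by blast
qed

lemma funpow_eq_id_of_lift:
  assumes "lifts S2 p F G" "F ` S2 \<subseteq> S2" "p ` S2 = S" "G ^^ n permutes S" "F ^^ n = id"
  shows "G ^^ n = id"
proof (rule permutes_eqI[OF assms(4) permutes_id])
  fix y assume "y \<in> S"
  then obtain x where "x \<in> S2" "y = p x" using assms(3) by blast
  then show "(G ^^ n) y = id y"
    using lifts_funpow[OF assms(1,2), of n] assms(5) unfolding lifts_def by (metis id_apply)
qed

lemma lifts_agree_or_differ_everywhere:
  assumes cov: "covering_space S2 p S" and conn: "connected S2"
    and L: "continuous_on S2 L" "L ` S2 \<subseteq> S2" and F: "continuous_on S2 F" "F ` S2 \<subseteq> S2"
    and lifts: "lifts S2 p L G" "lifts S2 p F G"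
  shows "(\<forall>x\<in>S2. L x = F x) \<or> (\<forall>x\<in>S2. L x \<noteq> F x)"
proof (intro disjCI ballI)
  fix x assume "\<not> (\<forall>x\<in>S2. L x \<noteq> F x)" and x: "x \<in> S2"
  then obtain x0 where x0: "x0 \<in> S2" "L x0 = F x0" by blast
  have cp: "continuous_on S2 p" using cov covering_space_imp_continuous by blast
  show "L x = F x"
  proof (rule covering_space_lift_unique[OF cov, of L x0 F S2 "p \<circ> L"])
    show "continuous_on S2 (p \<circ> L)" by (rule continuous_on_compose[OF L(1) continuous_on_subset[OF cp L(2)]])
    show "p \<circ> L \<in> S2 \<rightarrow> S" using L(2) covering_space_imp_surjective[OF cov] by auto
  qed (use L F lifts conn x0 x in \<open>auto simp: lifts_def\<close>)
qed

lemma deck_of_distinct_lifts: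
  assumes cov: "covering_space S2 p S" and conn: "connected S2"
    and L: "L permutes S2" "continuous_on S2 L" and F: "F permutes S2" "continuous_on S2 F"
    and lifts: "lifts S2 p L G" "lifts S2 p F G" and x0: "x0 \<in> S2" "L x0 \<noteq> F x0"
  shows "lifts S2 p (F \<circ> inv L) id" "\<forall>y\<in>S2. (F \<circ> inv L) y \<noteq> y"
proof -
  have differ: "\<forall>x\<in>S2. L x \<noteq> F x"
    using lifts_agree_or_differ_everywhere[OF cov conn L(2) _ F(2) _ lifts] x0 L(1) F(1)
    by (auto simp: permutes_image)
  show "lifts S2 p (F \<circ> inv L) id"
    unfolding lifts_def
  proof
    fix y assume y: "y \<in> S2"
    then have "inv L y \<in> S2" using permutes_in_image[OF permutes_inv[OF L(1)]] by blast
    then show "p ((F \<circ> inv L) y) = id (p y)"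
      using lifts permutes_inverses(1)[OF L(1)] unfolding lifts_def by (metis comp_apply id_apply)
  qed
  show "\<forall>y\<in>S2. (F \<circ> inv L) y \<noteq> y"
    using differ permutes_inverses(1)[OF L(1)] permutes_in_image[OF permutes_inv[OF L(1)]]
    by (metis comp_apply)
qed

lemma lift_eq_deck_comp:
  assumes cov: "two_fold_cover S2 S p" and conn: "connected S2"
    and L: "continuous_on S2 L" "L ` S2 \<subseteq> S2" and F: "continuous_on S2 F" "F ` S2 \<subseteq> S2"
    and lifts: "lifts S2 p L G" "lifts S2 p F G" and x0: "x0 \<in> S2" "L x0 \<noteq> F x0"
    and deck: "\<tau> ` S2 \<subseteq> S2" "lifts S2 p \<tau> id" "\<forall>y\<in>S2. \<tau> y \<noteq> y"
  shows "\<forall>x\<in>S2. F x = \<tau> (L x)"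
proof
  fix x assume x: "x \<in> S2"
  have covs: "covering_space S2 p S" using cov unfolding two_fold_cover_def by blast
  have "F x \<noteq> L x"
    using lifts_agree_or_differ_everywhere[OF covs conn L F lifts] x0 x by fastforce
  moreover have "p (F x) = p (L x)" "p (\<tau> (L x)) = p (L x)" "\<tau> (L x) \<noteq> L x"
    using lifts deck L(2) x unfolding lifts_def by auto
  moreover have "L x \<in> S2" "F x \<in> S2" "\<tau> (L x) \<in> S2" using L(2) F(2) deck(1) x by auto
  ultimately show "F x = \<tau> (L x)" using two_fold_cover_other_point_unique[OF cov] by blast
qed

lemma word_length_lift_le_deck_comp:
  assumes cov: "two_fold_cover S2 S p" and conn: "connected S2" and A2: "A2 \<subseteq> Diff S2"
    and L: "L \<in> gen_group S2 A2" "lifts S2 p L G" and F: "F \<in> gen_group S2 A2" "lifts S2 p F G"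
    and \<tau>: "\<tau> \<in> gen_group S2 A2" "lifts S2 p \<tau> id" "\<forall>y\<in>S2. \<tau> y \<noteq> y"
  shows "word_length S2 A2 F \<le> word_length S2 A2 L + word_length S2 A2 \<tau>"
proof -
  have perm: "\<forall>g\<in>A2. g permutes S2" using A2 Diff_permutes by blast
  have perms: "L permutes S2" "F permutes S2" "\<tau> permutes S2"
    using gen_group_permutes[OF _ perm] L(1) F(1) \<tau>(1) by blast+
  show ?thesis
  proof (cases "\<forall>x\<in>S2. L x = F x")
    case True
    then show ?thesis using permutes_eqI[OF perms(1,2)] by simp
  next
    case False
    then obtain x0 where x0: "x0 \<in> S2" "L x0 \<noteq> F x0" by blast
    have "L ` S2 \<subseteq> S2" "F ` S2 \<subseteq> S2" "\<tau> ` S2 \<subseteq> S2"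
      using permutes_image[OF perms(1)] permutes_image[OF perms(2)] permutes_image[OF perms(3)]
      by simp_all
    then have "\<forall>x\<in>S2. F x = \<tau> (L x)"
      using gen_group_continuous_on[OF L(1) A2] gen_group_continuous_on[OF F(1) A2]
      by (intro lift_eq_deck_comp[OF cov conn _ _ _ _ L(2) F(2) x0 _ \<tau>(2,3)])
    then have "F = \<tau> \<circ> L"
      by (intro permutes_eqI[OF perms(2) permutes_compose[OF perms(1,3)]]) simp
    then show ?thesis using word_length_comp_le[OF \<tau>(1) L(1)] by (simp add: add.commute)
  qed
qed

text \<open>Either every L n equals f2 ^^ n, or some L n0 differs from it and then
  f2 ^^ n0 \<circ> inv (L n0) is the deck transformation, of fixed word length.\<close>

lemma word_length_power_lift_bound:
  assumes cov: "two_fold_cover S2 S p" and conn: "connected S2"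
    and A2: "A2 \<subseteq> Diff S2" "f2 \<in> A2" and f2: "lifts S2 p f2 f"
    and L: "\<And>n. L n \<in> gen_group S2 A2" "\<And>n. lifts S2 p (L n) (f ^^ n)"
  shows "\<exists>c. \<forall>n. word_length S2 A2 (f2 ^^ n) \<le> word_length S2 A2 (L n) + c"
proof -
  have perm: "\<forall>g\<in>A2. g permutes S2" using A2(1) Diff_permutes by blast
  have f2n: "f2 ^^ n \<in> gen_group S2 A2" for n
    by (rule gen_group_funpow[OF gen_group_generator[OF A2(2)]])
  have Ln: "L n permutes S2" "continuous_on S2 (L n)" for n
    using gen_group_permutes[OF L(1) perm] gen_group_continuous_on[OF L(1) A2(1)] by auto
  have "f2 ` S2 \<subseteq> S2" using perm A2(2) permutes_image by blast
  then have Fn: "f2 ^^ n permutes S2" "continuous_on S2 (f2 ^^ n)" "lifts S2 p (f2 ^^ n) (f ^^ n)"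
    for n using gen_group_permutes[OF f2n perm] gen_group_continuous_on[OF f2n A2(1)]
      lifts_funpow[OF f2] by auto
  show ?thesis
  proof (cases "\<forall>n. \<forall>x\<in>S2. L n x = (f2 ^^ n) x")
    case True
    then have "L n = f2 ^^ n" for n using permutes_eqI[OF Ln(1) Fn(1)] by blast
    then show ?thesis by auto
  next
    case False
    then obtain n0 x0 where x0: "x0 \<in> S2" "L n0 x0 \<noteq> (f2 ^^ n0) x0" by blast
    define \<tau> where "\<tau> = f2 ^^ n0 \<circ> inv (L n0)"
    have "\<tau> \<in> gen_group S2 A2" unfolding \<tau>_def
      by (rule gen_group_comp[OF f2n gen_group_inv[OF L(1) perm]])
    moreover have "lifts S2 p \<tau> id" "\<forall>y\<in>S2. \<tau> y \<noteq> y"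
      unfolding \<tau>_def
      using two_fold_coverD(1)[OF cov] by (rule deck_of_distinct_lifts[OF _ conn Ln Fn(1,2) L(2) Fn(3) x0])+
    ultimately show ?thesis
      using word_length_lift_le_deck_comp[OF cov conn A2(1) L(1,2) f2n Fn(3)] by blast
  qed
qed

lemma word_length_lifted_powers_bound:
  assumes cov: "two_fold_cover S2 S p" and conn: "connected S2"
    and A: "f \<in> gen_group S A" "A \<subseteq> Diff S"
    and A2: "A2 \<subseteq> Diff S2" "\<forall>g\<in>A. lf g \<in> A2 \<and> lifts S2 p (lf g) g" "f2 \<in> A2"
    and f2: "lifts S2 p f2 f"
  shows "\<exists>c. \<forall>n. word_length S2 A2 (f2 ^^ n) \<le> word_length S A (f ^^ n) + c"
proof -
  let ?P = "\<lambda>n L. L \<in> gen_group S2 A2 \<and> lifts S2 p L (f ^^ n) \<and>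
      word_length S2 A2 L \<le> word_length S A (f ^^ n)"
  have "\<exists>L. ?P n L" for n
  proof -
    obtain L where "L \<in> gen_group S2 A2" "lifts S2 p L (f ^^ n)"
      "word_length S2 A2 L \<le> word_length S A (f ^^ n)"
      by (rule gen_group_lift[OF gen_group_funpow[OF A(1)] A2(2) A(2) A2(1)])
        (use two_fold_coverD(2)[OF cov] in blast)
    then show ?thesis by blast
  qed
  then obtain L where "\<forall>n. ?P n (L n)" using choice[of ?P] by blast
  then have L: "L n \<in> gen_group S2 A2" "lifts S2 p (L n) (f ^^ n)"
      "word_length S2 A2 (L n) \<le> word_length S A (f ^^ n)" for n by auto
  obtain c where "\<forall>n. word_length S2 A2 (f2 ^^ n) \<le> word_length S2 A2 (L n) + c"
    using word_length_power_lift_bound[OF cov conn A2(1,3) f2 L(1,2)] by blast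
  then have "word_length S2 A2 (f2 ^^ n) \<le> word_length S A (f ^^ n) + c" for n
    using L(3)[of n] by (meson add_right_mono order_trans)
  then show ?thesis by blast
qed

section \<open>Lifting isotopies\<close>

text \<open>Locally a lift is a C1 local inverse of p composed with the C1 map G \<circ> p.\<close>

lemma C1_map_lift:
  assumes cov: "two_fold_cover S2 S p" and F: "continuous_on S2 F" "F ` S2 \<subseteq> S2"
    and G: "C1_map S S G" and lift: "lifts S2 p F G"
  shows "C1_map S2 S2 F"
  unfolding C1_map_iff
proof (intro conjI ballI F(2))
  fix x assume x: "x \<in> S2"
  have Fx: "F x \<in> S2" using F(2) x by blast
  obtain W OW where W: "W = S2 \<inter> OW" "open OW" "F x \<in> W" "inj_on p W"
    "C1_map (p ` W) S2 (inv_into W p)"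
    by (rule two_fold_cover_local_section[OF cov Fx])
  obtain Q where Q: "open Q" "S2 \<inter> F -` OW = S2 \<inter> Q"
    using continuous_openin_preimage_gen[OF F(1) W(2)] unfolding openin_open by blast
  have FW: "F y \<in> W" if "y \<in> S2 \<inter> Q" for y using that Q(2) F(2) W(1) by blast
  have xQ: "x \<in> Q" using W(1,3) x Q(2) by blast
  have pF: "p (F y) = G (p y)" if "y \<in> S2" for y using lift that unfolding lifts_def by blast
  have p_S2: "p ` S2 = S" "C1_map S2 S p" using two_fold_coverD[OF cov] by auto
  have "C1_at (S2 \<inter> Q) p x" using p_S2(2) x C1_at_subset unfolding C1_map_iff by blast
  moreover have "C1_at S G (p x)" using G x p_S2(1) unfolding C1_map_iff by auto
  ultimately have Gp: "C1_at (S2 \<inter> Q) (G \<circ> p) x"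
    by (rule C1_at_compose) (use p_S2(1) x xQ in auto)
  have img: "(G \<circ> p) ` (S2 \<inter> Q) \<subseteq> p ` W"
  proof
    fix u assume "u \<in> (G \<circ> p) ` (S2 \<inter> Q)"
    then obtain y where "y \<in> S2 \<inter> Q" "u = p (F y)" using pF by auto
    then show "u \<in> p ` W" using FW by blast
  qed
  have "C1_at (p ` W) (inv_into W p) ((G \<circ> p) x)"
    using W(5) W(3) pF[OF x] unfolding C1_map_iff by auto
  then have "C1_at (S2 \<inter> Q) (inv_into W p \<circ> (G \<circ> p)) x"
    by (rule C1_at_compose[OF Gp _ img]) (use x xQ in auto)
  moreover have "(inv_into W p \<circ> (G \<circ> p)) y = F y" if "y \<in> S2 \<inter> Q" for y
    using inv_into_f_f[OF W(4) FW[OF that]] pF that by simp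
  ultimately show "C1_at S2 F x" using C1_at_transform_open[OF _ Q(1) xQ] by blast
qed

lemma injective_lift_surjective:
  assumes cov: "two_fold_cover S2 S p" and G: "G permutes S"
    and F: "F ` S2 \<subseteq> S2" "inj_on F S2" and lift: "lifts S2 p F G"
  shows "F ` S2 = S2"
proof
  show "S2 \<subseteq> F ` S2"
  proof
    fix z assume z: "z \<in> S2"
    have "p z \<in> S" using z two_fold_coverD(2)[OF cov] by blast
    then have "inv G (p z) \<in> S" by (simp add: permutes_in_image[OF permutes_inv[OF G]])
    then obtain x1 x2 where x: "{x\<in>S2. p x = inv G (p z)} = {x1, x2}" "x1 \<noteq> x2"
      by (rule two_fold_cover_fibre[OF cov])
    then have x12: "x1 \<in> S2" "x2 \<in> S2" "p x1 = inv G (p z)" "p x2 = inv G (p z)" by blast+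
    have pF: "p (F y) = G (p y)" if "y \<in> S2" for y using lift that unfolding lifts_def by blast
    have "p (F x1) = p z" "p (F x2) = p z"
      using pF[OF x12(1)] pF[OF x12(2)] x12(3,4) by (simp_all add: permutes_inverses(1)[OF G])
    moreover have "F x1 \<in> S2" "F x2 \<in> S2" using F(1) x12(1,2) by blast+
    moreover have "F x1 \<noteq> F x2" by (rule inj_on_contraD[OF F(2) x(2) x12(1,2)])
    ultimately have "F x1 = z \<or> F x2 = z"
      using two_fold_cover_other_point_unique[OF cov z] by metis
    then show "z \<in> F ` S2" using x12(1,2) by blast
  qed
qed (rule F(1))

lemma lift_in_Diff:
  assumes cov: "two_fold_cover S2 S p" and "compact S2" and G: "G \<in> Diff S"
    and F: "continuous_on S2 F" "F ` S2 \<subseteq> S2" "inj_on F S2" "\<forall>x. x \<notin> S2 \<longrightarrow> F x = x"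
    and lift: "lifts S2 p F G"
  shows "F \<in> Diff S2"
proof -
  have GS: "G permutes S" using Diff_permutes[OF G] .
  have surj: "F ` S2 = S2" by (rule injective_lift_surjective[OF cov GS F(2,3) lift])
  then have FS2: "F permutes S2" using F(3,4) by (intro bij_imp_permutes) (auto simp: bij_betw_def)
  obtain F' where hom: "homeomorphism S2 S2 F F'"
    using homeomorphism_compact[OF assms(2) F(1) surj F(3)] by blast
  have "inv F y = F' y" if "y \<in> S2" for y
  proof -
    have "F (F' y) = y" using hom that unfolding homeomorphism_def by blast
    then show ?thesis by (simp add: permutes_inv_eq[OF FS2])
  qed
  moreover have "continuous_on S2 F'" using hom unfolding homeomorphism_def by blast
  ultimately have cont_inv: "continuous_on S2 (inv F)" using continuous_on_cong by force
  have "C1_map S S (inv G)"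
    using G C1_map_cong[of S "inv_into S G" "inv G"] permutes_inv_into_eq_inv[OF GS]
    unfolding Diff_def by blast
  moreover have "inv F ` S2 \<subseteq> S2" using permutes_image[OF permutes_inv[OF FS2]] by simp
  ultimately have "C1_map S2 S2 (inv F)"
    using C1_map_lift[OF cov cont_inv] lifts_inv[OF lift FS2 GS] two_fold_coverD(2)[OF cov]
    by blast
  then have "C1_map S2 S2 (inv_into S2 F)"
    using C1_map_cong[of S2 "inv_into S2 F" "inv F"] permutes_inv_into_eq_inv[OF FS2] by blast
  moreover have "C1_map S2 S2 F"
    using C1_map_lift[OF cov F(1,2) _ lift] G unfolding Diff_def by blast
  ultimately show ?thesis
    using permutes_imp_bij[OF FS2] F(4) unfolding Diff_def by blast
qed

lemma homotopy_lift_inj: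
  fixes k :: "real \<times> pt \<Rightarrow> pt"
  assumes cov: "covering_space S2 p S"
    and k: "continuous_on ({0..1} \<times> S2) k" "k \<in> ({0..1} \<times> S2) \<rightarrow> S2" "\<forall>y\<in>S2. k (0, y) = y"
    and same: "\<forall>s\<in>{0..1}. p (k (s, x)) = p (k (s, y))"
    and t: "t \<in> {0..1}" and x: "x \<in> S2" and y: "y \<in> S2" and meet: "k (t, x) = k (t, y)"
  shows "x = y"
proof -
  have sub: "{0..t} \<subseteq> {0..1}" using t by auto
  have path: "continuous_on {0..t} (\<lambda>s. k (s, z))" "(\<lambda>s. k (s, z)) \<in> {0..t} \<rightarrow> S2"
    if "z \<in> S2" for z
    using sub that k(2) by (auto intro!: continuous_on_compose2[OF k(1)] continuous_intros)
  have cont: "continuous_on {0..t} (\<lambda>s. p (k (s, x)))"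
    by (rule continuous_on_compose2[OF covering_space_imp_continuous[OF cov] path(1)[OF x]])
      (use path(2)[OF x] in auto)
  have "k (0, x) = k (0, y)"
  proof (rule covering_space_lift_unique
      [OF cov, of "\<lambda>s. k (s, x)" t "\<lambda>s. k (s, y)" "{0..t}" "\<lambda>s. p (k (s, x))"])
    show "(\<lambda>s. p (k (s, x))) \<in> {0..t} \<rightarrow> S"
      using path(2)[OF x] covering_space_imp_surjective[OF cov] by blast
    show "\<And>s. s \<in> {0..t} \<Longrightarrow> p (k (s, x)) = p (k (s, y))" using same sub by blast
  qed (use cont path[OF x] path[OF y] meet t in auto)
  then show ?thesis using k(3) x y by simp
qed

lemma local_section_homeomorphism:
  assumes cov: "two_fold_cover S2 S p"
    and W: "W \<subseteq> S2" "inj_on p W" "C1_map (p ` W) S2 (inv_into W p)"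
  shows "homeomorphism W (p ` W) p (inv_into W p)"
  unfolding homeomorphism_def
proof (intro conjI ballI)
  show "continuous_on W p" using two_fold_coverD(3)[OF cov] W(1) by (rule continuous_on_subset)
  show "continuous_on (p ` W) (inv_into W p)" using C1_map_imp_continuous_on[OF W(3)] .
  show "inv_into W p ` p ` W = W" using W(2) by simp
qed (use W(2) in \<open>auto simp: f_inv_into_f\<close>)

lemma chart_imp_continuous_on: "chart S \<phi> \<phi>' V \<Longrightarrow> continuous_on V \<phi>"
  unfolding chart_def by (meson continuous_at_imp_continuous_on has_derivative_continuous)

lemma inj_derivative_of_left_inverse:
  fixes f :: "'a::euclidean_space \<Rightarrow> 'b::real_normed_vector" and h :: "'a \<Rightarrow> 'c::real_normed_vector"
  assumes "(f has_derivative f') (at v)" "(g has_derivative g') (at (f v))"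
    and "(h has_derivative h') (at v)" "open N" "v \<in> N" "\<And>w. w \<in> N \<Longrightarrow> g (f w) = h w"
    and "inj h'"
  shows "inj f'"
proof -
  have "((g \<circ> f) has_derivative (g' \<circ> f')) (at v)" by (rule diff_chain_at[OF assms(1,2)])
  then have "(h has_derivative (g' \<circ> f')) (at v)"
    by (rule has_derivative_transform_within_open[OF _ assms(4,5)]) (simp add: assms(6))
  then have "h' = g' \<circ> f'" using has_derivative_unique[OF assms(3)] by blast
  then show ?thesis using assms(7) inj_on_imageI2 by metis
qed

lemma C1_at_compose_differentiable:
  fixes \<phi> :: "'a::euclidean_space \<Rightarrow> pt"
  assumes V: "open V" "\<forall>v\<in>V. (\<phi> has_derivative blinfun_apply (\<phi>' v)) (at v)" "continuous_on V \<phi>'"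
    and A: "\<phi> ` V \<subseteq> A" "C1_at A F (\<phi> v0)" and v0: "v0 \<in> V"
  obtains V1 \<psi>' where "open V1" "v0 \<in> V1" "V1 \<subseteq> V"
    "\<forall>v\<in>V1. ((F \<circ> \<phi>) has_derivative blinfun_apply (\<psi>' v)) (at v)" "continuous_on V1 \<psi>'"
proof -
  obtain U g where U: "open U" "\<phi> v0 \<in> U" "C1_on g U" "\<forall>y\<in>A \<inter> U. g y = F y"
    using A(2) unfolding C1_at_def by blast
  obtain g' where dg: "\<forall>x\<in>U. (g has_derivative blinfun_apply (g' x)) (at x)"
    and cg': "continuous_on U g'" using U(3) unfolding C1_on_def by blast
  have c\<phi>: "continuous_on V \<phi>"
    using V(2) by (meson continuous_at_imp_continuous_on has_derivative_continuous)
  define V1 where "V1 = \<phi> -` U \<inter> V"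
  have oV1: "open V1" unfolding V1_def using continuous_on_open_vimage[OF V(1)] c\<phi> U(1) by blast
  have V1: "v0 \<in> V1" "V1 \<subseteq> V" unfolding V1_def using v0 U(2) by auto
  have V1A: "\<phi> w \<in> A \<inter> U" if "w \<in> V1" for w using that A(1) unfolding V1_def by auto
  define \<psi>' where "\<psi>' v = g' (\<phi> v) o\<^sub>L \<phi>' v" for v
  have "((F \<circ> \<phi>) has_derivative blinfun_apply (\<psi>' v)) (at v)" if v: "v \<in> V1" for v
  proof -
    have "((\<lambda>w. g (\<phi> w)) has_derivative (\<lambda>a. g' (\<phi> v) (\<phi>' v a))) (at v)"
      by (rule has_derivative_compose[OF V(2)[rule_format] dg[rule_format]])
        (use v V1(2) V1A in auto)
    then have "((g \<circ> \<phi>) has_derivative blinfun_apply (\<psi>' v)) (at v)"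
      unfolding \<psi>'_def by (simp add: o_def blinfun_compose.rep_eq)
    then show ?thesis
      by (rule has_derivative_transform_within_open[OF _ oV1 v]) (use V1A U(4) in auto)
  qed
  moreover have "continuous_on V1 \<psi>'"
  proof -
    have "continuous_on V1 (g' \<circ> \<phi>)"
      using continuous_on_subset[OF c\<phi> V1(2)] continuous_on_subset[OF cg'] V1A
      by (intro continuous_on_compose) blast+
    moreover have "continuous_on V1 \<phi>'" using V(3) V1(2) by (rule continuous_on_subset)
    ultimately show ?thesis unfolding \<psi>'_def o_def by (intro continuous_intros)
  qed
  ultimately show ?thesis using that oV1 V1 by blast
qed

lemma inj_derivative_through_local_section:
  fixes \<phi> :: "'a::euclidean_space \<Rightarrow> pt"
  assumes W: "inj_on p W" "C1_map (p ` W) S2 (inv_into W p)"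
    and V0: "open V0" "v \<in> V0" "\<phi> ` V0 \<subseteq> W"
    and d: "\<forall>w\<in>V0. ((p \<circ> \<phi>) has_derivative blinfun_apply (\<psi>' w)) (at w)"
    and d\<phi>: "(\<phi> has_derivative \<phi>'v) (at v)" "inj \<phi>'v"
  shows "inj (blinfun_apply (\<psi>' v))"
proof -
  have "p (\<phi> v) \<in> p ` W" using V0(2,3) by blast
  then obtain U g where U: "open U" "p (\<phi> v) \<in> U" "C1_on g U" "\<forall>y\<in>p ` W \<inter> U. g y = inv_into W p y"
    using W(2) unfolding C1_map_iff C1_at_def by blast
  obtain g' where dg: "\<forall>x\<in>U. (g has_derivative blinfun_apply (g' x)) (at x)"
    using U(3) unfolding C1_on_def by blast
  have "continuous_on V0 (p \<circ> \<phi>)"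
    using d by (meson continuous_at_imp_continuous_on has_derivative_continuous)
  then have N: "open ((p \<circ> \<phi>) -` U \<inter> V0)" using continuous_on_open_vimage[OF V0(1)] U(1) by blast
  have "v \<in> (p \<circ> \<phi>) -` U \<inter> V0" using U(2) V0(2) by simp
  moreover have "g ((p \<circ> \<phi>) w) = \<phi> w" if "w \<in> (p \<circ> \<phi>) -` U \<inter> V0" for w
    using that U(4) V0(3) W(1) by (auto simp: inv_into_f_f image_subset_iff)
  ultimately show ?thesis
    using U(2) inj_derivative_of_left_inverse[OF d[rule_format, OF V0(2)] dg[rule_format]
      d\<phi>(1) N _ _ d\<phi>(2)] by auto
qed

lemma chart_compose_local_section:
  assumes hom: "homeomorphism V (\<phi> ` V) \<phi> \<psi>" "openin (top_of_set S2) (\<phi> ` V)"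
    and V0: "open V0" "V0 \<subseteq> V" "\<phi> ` V0 \<subseteq> W"
    and W: "W \<subseteq> S2" "homeomorphism W (p ` W) p q" "openin (top_of_set S) (p ` W)"
  shows "openin (top_of_set S) ((p \<circ> \<phi>) ` V0)"
    "homeomorphism V0 ((p \<circ> \<phi>) ` V0) (p \<circ> \<phi>) (\<psi> \<circ> q)"
proof -
  have "homeomorphism V0 (\<phi> ` V0) \<phi> \<psi>"
    by (rule homeomorphism_of_subsets[OF hom(1) V0(2)]) auto
  moreover have "homeomorphism (\<phi> ` V0) (p ` \<phi> ` V0) p q"
    by (rule homeomorphism_of_subsets[OF W(2) V0(3)]) auto
  ultimately show "homeomorphism V0 ((p \<circ> \<phi>) ` V0) (p \<circ> \<phi>) (\<psi> \<circ> q)"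
    using homeomorphism_compose by (simp add: image_comp)
  have "openin (top_of_set V) V0" using V0(1,2) by (simp add: open_subset)
  then have "openin (top_of_set (\<phi> ` V)) (\<phi> ` V0)" by (rule homeomorphism_imp_open_map[OF hom(1)])
  then have "openin (top_of_set S2) (\<phi> ` V0)" using hom(2) by (rule openin_trans)
  then have "openin (top_of_set W) (\<phi> ` V0)" by (rule openin_subset_trans[OF _ V0(3) W(1)])
  then have "openin (top_of_set (p ` W)) (p ` \<phi> ` V0)" by (rule homeomorphism_imp_open_map[OF W(2)])
  then show "openin (top_of_set S) ((p \<circ> \<phi>) ` V0)"
    using W(3) openin_trans by (simp add: image_comp)
qed

lemma chart_compose_cover:
  assumes cov: "two_fold_cover S2 S p" and ch: "chart S2 \<phi> \<phi>' V" and v0: "v0 \<in> V"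
  obtains V0 \<psi>' where "open V0" "v0 \<in> V0" "V0 \<subseteq> V" "chart S (p \<circ> \<phi>) \<psi>' V0"
proof -
  have oV: "open V" and d\<phi>: "\<forall>v\<in>V. (\<phi> has_derivative blinfun_apply (\<phi>' v)) (at v)"
    and c\<phi>': "continuous_on V \<phi>'" and inj\<phi>: "\<forall>v\<in>V. inj (blinfun_apply (\<phi>' v))"
    and \<phi>V: "\<phi> ` V \<subseteq> S2" "openin (top_of_set S2) (\<phi> ` V)"
    using ch unfolding chart_def by blast+
  obtain \<psi> where hom\<phi>: "homeomorphism V (\<phi> ` V) \<phi> \<psi>" using ch unfolding chart_def by blast
  have "\<phi> v0 \<in> S2" using \<phi>V(1) v0 by blast
  then obtain W OW where W: "W = S2 \<inter> OW" "open OW" "\<phi> v0 \<in> W" "inj_on p W"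
    "openin (top_of_set S) (p ` W)" "C1_map (p ` W) S2 (inv_into W p)"
    by (rule two_fold_cover_local_section[OF cov])
  have "C1_at S2 p (\<phi> v0)"
    using two_fold_coverD(4)[OF cov] \<open>\<phi> v0 \<in> S2\<close> unfolding C1_map_iff by blast
  then obtain V1 \<psi>' where V1: "open V1" "v0 \<in> V1" "V1 \<subseteq> V"
    "\<forall>v\<in>V1. ((p \<circ> \<phi>) has_derivative blinfun_apply (\<psi>' v)) (at v)" "continuous_on V1 \<psi>'"
    by (rule C1_at_compose_differentiable[OF oV d\<phi> c\<phi>' \<phi>V(1) _ v0])
  define V0 where "V0 = \<phi> -` OW \<inter> V1"
  have "continuous_on V1 \<phi>" using chart_imp_continuous_on[OF ch] V1(3) by (rule continuous_on_subset)
  then have oV0: "open V0" unfolding V0_def using continuous_on_open_vimage[OF V1(1)] W(2) by blast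
  have V0: "v0 \<in> V0" "V0 \<subseteq> V" "\<phi> ` V0 \<subseteq> W"
    unfolding V0_def using V1(2,3) W(1,3) \<phi>V(1) by auto
  have d\<psi>: "\<forall>v\<in>V0. ((p \<circ> \<phi>) has_derivative blinfun_apply (\<psi>' v)) (at v)"
    using V1(4) unfolding V0_def by blast
  have "continuous_on V0 \<psi>'" using V1(5) unfolding V0_def by (rule continuous_on_subset) blast
  moreover have "inj (blinfun_apply (\<psi>' v))" if "v \<in> V0" for v
    by (rule inj_derivative_through_local_section[OF W(4,6) oV0 that V0(3) d\<psi>])
      (use d\<phi> inj\<phi> that V0(2) in auto)
  moreover have "homeomorphism W (p ` W) p (inv_into W p)"
    by (rule local_section_homeomorphism[OF cov _ W(4,6)]) (use W(1) in blast)
  then have "openin (top_of_set S) ((p \<circ> \<phi>) ` V0)"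
    "homeomorphism V0 ((p \<circ> \<phi>) ` V0) (p \<circ> \<phi>) (\<psi> \<circ> inv_into W p)"
    using chart_compose_local_section[OF hom\<phi> \<phi>V(2) oV0 V0(2,3) _ _ W(5)] W(1) by blast+
  moreover have "(p \<circ> \<phi>) ` V0 \<subseteq> S"
    using V0(2) \<phi>V(1) two_fold_coverD(2)[OF cov] by auto
  ultimately have "chart S (p \<circ> \<phi>) \<psi>' V0"
    unfolding chart_def using oV0 d\<psi> by blast
  then show ?thesis using that oV0 V0 by blast
qed

text \<open>Near a point, the lift is a C1 local inverse of p composed with the downstairs family,
  so its derivative is the chain rule product.\<close>

lemma lift_derivative_near:
  fixes h \<alpha> :: "real \<times> 'a::euclidean_space \<Rightarrow> pt"
  assumes cov: "two_fold_cover S2 S p" and V0: "open V0"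
    and D0: "continuous_on ({0..1} \<times> V0) D0"
      "\<forall>t\<in>{0..1}. \<forall>v\<in>V0. ((\<lambda>w. h (t, w)) has_derivative blinfun_apply (D0 (t, v))) (at v)"
    and \<alpha>: "continuous_on ({0..1} \<times> V0) \<alpha>" "\<alpha> ` ({0..1} \<times> V0) \<subseteq> S2"
      "\<forall>z\<in>{0..1} \<times> V0. p (\<alpha> z) = h z"
    and z0: "z0 \<in> {0..1} \<times> V0"
  shows "\<exists>N E. open N \<and> z0 \<in> N \<and> N \<subseteq> UNIV \<times> V0 \<and> continuous_on (({0..1} \<times> V0) \<inter> N) E \<and>
           (\<forall>t v. (t, v) \<in> ({0..1} \<times> V0) \<inter> N \<longrightarrow>
              ((\<lambda>w. \<alpha> (t, w)) has_derivative blinfun_apply (E (t, v))) (at v))"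
proof -
  let ?X = "{0..1} \<times> V0"
  have "\<alpha> z0 \<in> S2" using \<alpha>(2) z0 by blast
  then obtain OW U g g' where W: "open OW" "\<alpha> z0 \<in> OW" and U: "open U" "p (\<alpha> z0) \<in> U"
    and dg: "\<forall>x\<in>U. (g has_derivative blinfun_apply (g' x)) (at x)" and cg': "continuous_on U g'"
    and g: "\<And>y. y \<in> S2 \<inter> OW \<Longrightarrow> p y \<in> U \<Longrightarrow> g (p y) = y"
    by (rule two_fold_cover_C1_local_inverse[OF cov]) blast
  have cp\<alpha>: "continuous_on ?X (p \<circ> \<alpha>)"
    by (rule continuous_on_compose[OF \<alpha>(1) continuous_on_subset[OF two_fold_coverD(3)[OF cov] \<alpha>(2)]])
  define M where "M = (?X \<inter> \<alpha> -` OW) \<inter> (?X \<inter> (p \<circ> \<alpha>) -` U)"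
  have "openin (top_of_set ?X) M" unfolding M_def
    by (intro openin_Int continuous_openin_preimage_gen[OF \<alpha>(1) W(1)]
        continuous_openin_preimage_gen[OF cp\<alpha> U(1)])
  then obtain N' where N': "open N'" "M = ?X \<inter> N'" unfolding openin_open by blast
  define N where "N = N' \<inter> (UNIV \<times> V0)"
  have N: "open N" "N \<subseteq> UNIV \<times> V0" "?X \<inter> N = M"
    unfolding N_def using N'(1) V0 N'(2) by (auto intro: open_Times)
  have inM: "z0 \<in> M" unfolding M_def using z0 W(2) U(2) by auto
  have MW: "\<alpha> z \<in> S2 \<inter> OW" "p (\<alpha> z) \<in> U" "z \<in> ?X" if "z \<in> M" for z
    using that \<alpha>(2) unfolding M_def by auto
  define E where "E z = g' (p (\<alpha> z)) o\<^sub>L D0 z" for z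
  have "continuous_on M E"
  proof -
    have "continuous_on M (g' \<circ> (p \<circ> \<alpha>))"
    proof (rule continuous_on_compose)
      show "continuous_on M (p \<circ> \<alpha>)" using cp\<alpha> by (rule continuous_on_subset) (use MW(3) in blast)
      have "(p \<circ> \<alpha>) ` M \<subseteq> U" using MW(2) by auto
      then show "continuous_on ((p \<circ> \<alpha>) ` M) g'" using cg' continuous_on_subset by blast
    qed
    moreover have "continuous_on M D0" using D0(1) by (rule continuous_on_subset) (use MW(3) in blast)
    ultimately show ?thesis unfolding E_def o_def by (intro continuous_intros)
  qed
  moreover have "((\<lambda>w. \<alpha> (t, w)) has_derivative blinfun_apply (E (t, v))) (at v)"
    if tv: "(t, v) \<in> M" for t v
  proof -
    have t: "t \<in> {0..1}" and v: "v \<in> V0" using MW(3)[OF tv] by auto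
    define Ot where "Ot = Pair t -` N' \<inter> V0"
    have "continuous_on V0 (Pair t)" by (intro continuous_intros)
    then have oOt: "open Ot"
      unfolding Ot_def using N'(1) unfolding continuous_on_open_vimage[OF V0] by blast
    have vOt: "v \<in> Ot" using tv N'(2) v unfolding Ot_def by auto
    have OtM: "(t, w) \<in> M" if "w \<in> Ot" for w using that t N'(2) unfolding Ot_def by auto
    have "((\<lambda>w. g (h (t, w))) has_derivative blinfun_apply (E (t, v))) (at v)"
      using has_derivative_compose[OF D0(2)[rule_format, OF t v] dg[rule_format]] MW[OF tv] \<alpha>(3)
      by (simp add: E_def o_def blinfun_compose.rep_eq)
    moreover have "g (h (t, w)) = \<alpha> (t, w)" if "w \<in> Ot" for w
      using g[OF MW(1,2)[OF OtM[OF that]]] \<alpha>(3) MW(3)[OF OtM[OF that]] by simp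
    ultimately show ?thesis by (rule has_derivative_transform_within_open[OF _ oOt vOt])
  qed
  ultimately show ?thesis using N inM by blast
qed

text \<open>Derivatives are unique, so locally chosen continuous derivative families agree on
  overlaps and glue to a global one.\<close>

lemma derivative_family_glue:
  fixes F :: "'c::t2_space \<Rightarrow> 'a::euclidean_space \<Rightarrow> 'b::real_normed_vector"
  assumes local: "\<And>z. z \<in> X \<Longrightarrow> \<exists>N E. open N \<and> z \<in> N \<and> continuous_on (X \<inter> N) E \<and>
             (\<forall>t v. (t, v) \<in> X \<inter> N \<longrightarrow> (F t has_derivative blinfun_apply (E (t, v))) (at v))"
  shows "\<exists>D. continuous_on X D \<and> (\<forall>t v. (t, v) \<in> X \<longrightarrow> (F t has_derivative blinfun_apply (D (t, v))) (at v))"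
proof -
  define D where "D z = (SOME L. (F (fst z) has_derivative blinfun_apply L) (at (snd z)))" for z
  have dD: "(F t has_derivative blinfun_apply (D (t, v))) (at v)" if "(t, v) \<in> X" for t v
  proof -
    have "\<exists>L. (F t has_derivative blinfun_apply L) (at v)" using local[OF that] that by blast
    from someI_ex[OF this] show ?thesis unfolding D_def by simp
  qed
  have "continuous (at z within X) D" if z: "z \<in> X" for z
  proof -
    obtain N E where NE: "open N" "z \<in> N" "continuous_on (X \<inter> N) E"
      "\<forall>t v. (t, v) \<in> X \<inter> N \<longrightarrow> (F t has_derivative blinfun_apply (E (t, v))) (at v)"
      using local[OF z] by blast
    have "D y = E y" if "y \<in> X \<inter> N" for y
      using has_derivative_unique[OF dD NE(4)[rule_format]] that
      by (metis IntD1 blinfun_apply_inject prod.collapse)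
    then have "continuous_on (X \<inter> N) D" using NE(3) continuous_on_cong by blast
    then have "continuous (at z within X \<inter> N) D"
      using z NE(2) continuous_on_eq_continuous_within by blast
    moreover have "at z within X = at z within X \<inter> N" by (rule at_within_nhd[OF NE(2,1)]) auto
    ultimately show ?thesis by simp
  qed
  then show ?thesis using dD continuous_on_eq_continuous_within by blast
qed

lemma isotopy_homotopy_lift:
  assumes cov: "two_fold_cover S2 S p" and iso: "C1_isotopy S H" and H0: "H 0 = id"
  obtains k where "continuous_on ({0..1} \<times> S2) k" "k \<in> ({0..1} \<times> S2) \<rightarrow> S2"
    "\<forall>y\<in>S2. k (0, y) = y" "\<forall>t\<in>{0..1}. \<forall>x\<in>S2. p (k (t, x)) = H t (p x)"
proof -
  have HD: "\<forall>t\<in>{0..1}. H t \<in> Diff S" and cH: "continuous_on ({0..1} \<times> S) (\<lambda>(t, x). H t x)"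
    using iso unfolding C1_isotopy_def by blast+
  have pS: "p ` S2 = S" and cp: "continuous_on S2 p" using two_fold_coverD[OF cov] by auto
  define h where "h z = H (fst z) (p (snd z))" for z :: "real \<times> pt"
  have "continuous_on ({0..1} \<times> S2) (\<lambda>z. (fst z, p (snd z)))"
    by (intro continuous_intros continuous_on_compose2[OF cp]) auto
  moreover have "(\<lambda>z. (fst z, p (snd z))) ` ({0..1} \<times> S2) \<subseteq> {0..1} \<times> S" using pS by auto
  ultimately have "continuous_on ({0..1} \<times> S2) ((\<lambda>(t, x). H t x) \<circ> (\<lambda>z. (fst z, p (snd z))))"
    using continuous_on_compose cH continuous_on_subset by blast
  then have ch: "continuous_on ({0..1} \<times> S2) h" unfolding h_def o_def by (simp add: case_prod_beta)
  have hS: "h \<in> ({0..1} \<times> S2) \<rightarrow> S"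
    unfolding h_def using HD pS Diff_permutes by (auto simp: permutes_in_image)
  have h0: "\<And>y. y \<in> S2 \<Longrightarrow> h (0, y) = p (id y)" unfolding h_def using H0 by simp
  obtain k where "continuous_on ({0..1} \<times> S2) k" "k \<in> ({0..1} \<times> S2) \<rightarrow> S2"
    "\<And>y. y \<in> S2 \<Longrightarrow> k (0, y) = id y" "\<And>z. z \<in> {0..1} \<times> S2 \<Longrightarrow> h z = p (k z)"
    by (rule covering_space_lift_homotopy[OF two_fold_coverD(1)[OF cov] ch hS h0 continuous_on_id'])
      auto
  then show ?thesis using that unfolding h_def by auto
qed

lemma lifted_isotopy_in_Diff:
  fixes k :: "real \<times> pt \<Rightarrow> pt"
  assumes cov: "two_fold_cover S2 S p" and "compact S2" and H: "H t \<in> Diff S" and t: "t \<in> {0..1}"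
    and k: "continuous_on ({0..1} \<times> S2) k" "k \<in> ({0..1} \<times> S2) \<rightarrow> S2" "\<forall>y\<in>S2. k (0, y) = y"
    and kp: "\<forall>t\<in>{0..1}. \<forall>x\<in>S2. p (k (t, x)) = H t (p x)"
  shows "(\<lambda>x. if x \<in> S2 then k (t, x) else x) \<in> Diff S2"
proof (rule lift_in_Diff[OF cov assms(2) H])
  have "continuous_on S2 (\<lambda>x. k (t, x))" using continuous_on_o_Pair[OF k(1) t] by (simp add: o_def)
  then show "continuous_on S2 (\<lambda>x. if x \<in> S2 then k (t, x) else x)"
    by (rule continuous_on_cong[THEN iffD1, rotated 2]) auto
  show "(\<lambda>x. if x \<in> S2 then k (t, x) else x) ` S2 \<subseteq> S2" using k(2) t by auto
  show "lifts S2 p (\<lambda>x. if x \<in> S2 then k (t, x) else x) (H t)" using kp t by (simp add: lifts_def)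
  have "H t permutes S" using Diff_permutes[OF H] .
  show "inj_on (\<lambda>x. if x \<in> S2 then k (t, x) else x) S2"
  proof (rule inj_onI)
    fix x y assume x: "x \<in> S2" and y: "y \<in> S2"
      and "(if x \<in> S2 then k (t, x) else x) = (if y \<in> S2 then k (t, y) else y)"
    then have meet: "k (t, x) = k (t, y)" by simp
    then have "H t (p x) = H t (p y)" using kp t x y by metis
    then have "p x = p y" using permutes_inj[OF \<open>H t permutes S\<close>] by (simp add: inj_eq)
    then show "x = y"
      using homotopy_lift_inj[OF two_fold_coverD(1)[OF cov] k _ t x y meet] kp x y by simp
  qed
qed auto

lemma lifted_isotopy_derivative_near:
  fixes k :: "real \<times> pt \<Rightarrow> pt"
  assumes cov: "two_fold_cover S2 S p" and iso: "C1_isotopy S H"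
    and k: "continuous_on ({0..1} \<times> S2) k" "k \<in> ({0..1} \<times> S2) \<rightarrow> S2"
    and kp: "\<forall>t\<in>{0..1}. \<forall>x\<in>S2. p (k (t, x)) = H t (p x)"
    and ch: "chart S2 \<phi> \<phi>' V" and z: "z \<in> {0..1} \<times> V"
  shows "\<exists>N E. open N \<and> z \<in> N \<and> continuous_on (({0..1} \<times> V) \<inter> N) E \<and>
           (\<forall>t v. (t, v) \<in> ({0..1} \<times> V) \<inter> N \<longrightarrow>
              ((\<lambda>w. k (t, \<phi> w)) has_derivative blinfun_apply (E (t, v))) (at v))"
proof -
  obtain t0 v0 where z0: "z = (t0, v0)" "t0 \<in> {0..1}" "v0 \<in> V" using z by auto
  obtain V0 \<psi>' where V0: "open V0" "v0 \<in> V0" "V0 \<subseteq> V" and ch0: "chart S (p \<circ> \<phi>) \<psi>' V0"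
    by (rule chart_compose_cover[OF cov ch z0(3)])
  obtain D0 :: "real \<times> (real^2) \<Rightarrow> ((real^2) \<Rightarrow>\<^sub>L pt)" where D0: "continuous_on ({0..1} \<times> V0) D0"
    "\<forall>t\<in>{0..1}. \<forall>v\<in>V0. ((\<lambda>w. H t ((p \<circ> \<phi>) w)) has_derivative blinfun_apply (D0 (t, v))) (at v)"
    using iso ch0 unfolding C1_isotopy_def by blast
  have \<phi>V: "\<phi> ` V \<subseteq> S2" using ch unfolding chart_def by blast
  have "continuous_on ({0..1} \<times> V0) (\<lambda>z. \<phi> (snd z))"
    by (rule continuous_on_compose2[OF continuous_on_subset[OF chart_imp_continuous_on[OF ch] V0(3)]
          continuous_on_snd]) auto
  then have "continuous_on ({0..1} \<times> V0) (\<lambda>z. (fst z, \<phi> (snd z)))"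
    by (intro continuous_intros)
  then have \<alpha>: "continuous_on ({0..1} \<times> V0) (\<lambda>z. k (fst z, \<phi> (snd z)))"
    by (rule continuous_on_compose2[OF k(1)]) (use \<phi>V V0(3) in force)
  have \<alpha>S: "(\<lambda>z. k (fst z, \<phi> (snd z))) ` ({0..1} \<times> V0) \<subseteq> S2" using k(2) \<phi>V V0(3) by force
  have \<alpha>p: "\<forall>z\<in>{0..1} \<times> V0. p (k (fst z, \<phi> (snd z))) = H (fst z) ((p \<circ> \<phi>) (snd z))"
    using kp \<phi>V V0(3) by force
  have D0': "\<forall>t\<in>{0..1}. \<forall>v\<in>V0. ((\<lambda>w. (\<lambda>z. H (fst z) ((p \<circ> \<phi>) (snd z))) (t, w))
      has_derivative blinfun_apply (D0 (t, v))) (at v)"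
    using D0(2) by simp
  have "z \<in> {0..1} \<times> V0" using z0 V0(2) by simp
  from lift_derivative_near[OF cov V0(1) D0(1) D0' \<alpha> \<alpha>S \<alpha>p this]
  obtain N E where "open N" "z \<in> N" "N \<subseteq> UNIV \<times> V0"
    "continuous_on (({0..1} \<times> V0) \<inter> N) E"
    "\<forall>t v. (t, v) \<in> ({0..1} \<times> V0) \<inter> N \<longrightarrow>
       ((\<lambda>w. k (t, \<phi> w)) has_derivative blinfun_apply (E (t, v))) (at v)"
    by auto
  moreover have "({0..1} \<times> V) \<inter> N = ({0..1} \<times> V0) \<inter> N" using \<open>N \<subseteq> UNIV \<times> V0\<close> V0(3) by auto
  ultimately show ?thesis by metis
qed

lemma C1_isotopy_lift:
  assumes surf: "closed_surface S2" and cov: "two_fold_cover S2 S p"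
    and iso: "C1_isotopy S H" and H0: "H 0 = id"
  obtains H2 where "C1_isotopy S2 H2" "H2 0 = id" "\<forall>t\<in>{0..1}. lifts S2 p (H2 t) (H t)"
proof -
  obtain k where k: "continuous_on ({0..1} \<times> S2) k" "k \<in> ({0..1} \<times> S2) \<rightarrow> S2"
    "\<forall>y\<in>S2. k (0, y) = y" and kp: "\<forall>t\<in>{0..1}. \<forall>x\<in>S2. p (k (t, x)) = H t (p x)"
    by (rule isotopy_homotopy_lift[OF cov iso H0])
  define H2 where "H2 t x = (if x \<in> S2 then k (t, x) else x)" for t x
  have "compact S2" using surf unfolding closed_surface_def by blast
  then have "\<forall>t\<in>{0..1}. H2 t \<in> Diff S2"
    using iso lifted_isotopy_in_Diff[OF cov _ _ _ k kp] unfolding H2_def C1_isotopy_def by blast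
  moreover have "continuous_on ({0..1} \<times> S2) (\<lambda>(t, x). H2 t x)"
    using k(1) by (rule continuous_on_cong[THEN iffD1, rotated 2]) (auto simp: H2_def)
  moreover have "\<exists>D. continuous_on ({0..1} \<times> V) D \<and>
      (\<forall>t\<in>{0..1}. \<forall>v\<in>V. ((\<lambda>w. H2 t (\<phi> w)) has_derivative blinfun_apply (D (t, v))) (at v))"
    if ch: "chart S2 \<phi> \<phi>' V" for \<phi> \<phi>' V
  proof -
    obtain D where D: "continuous_on ({0..1} \<times> V) D"
      "\<forall>t v. (t, v) \<in> {0..1} \<times> V \<longrightarrow> ((\<lambda>w. k (t, \<phi> w)) has_derivative blinfun_apply (D (t, v))) (at v)"
      using derivative_family_glue[of "{0..1} \<times> V" "\<lambda>t w. k (t, \<phi> w)"]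
        lifted_isotopy_derivative_near[OF cov iso k(1,2) kp ch] by blast
    have "open V" "\<phi> ` V \<subseteq> S2" using ch unfolding chart_def by blast+
    then have "((\<lambda>w. H2 t (\<phi> w)) has_derivative blinfun_apply (D (t, v))) (at v)"
      if "t \<in> {0..1}" "v \<in> V" for t v
      using has_derivative_transform_within_open[OF D(2)[rule_format] \<open>open V\<close>] that
      by (auto simp: H2_def image_subset_iff)
    then show ?thesis using D(1) by blast
  qed
  ultimately have "C1_isotopy S2 H2" unfolding C1_isotopy_def by blast
  moreover have "H2 0 = id" using k(3) by (auto simp: H2_def)
  moreover have "\<forall>t\<in>{0..1}. lifts S2 p (H2 t) (H t)" using kp by (simp add: H2_def lifts_def)
  ultimately show ?thesis using that by blast
qed

lemma Diff0_subset_Diff: "Diff0 S \<subseteq> Diff S"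
  unfolding Diff0_def by auto

lemma Diff0_lift:
  assumes "closed_surface S2" "two_fold_cover S2 S p" "g \<in> Diff0 S"
  obtains g2 where "g2 \<in> Diff0 S2" "lifts S2 p g2 g"
proof -
  obtain H where iso: "C1_isotopy S H" and H: "H 0 = id" "H 1 = g"
    using assms(3) unfolding Diff0_def by blast
  obtain H2 where H2: "C1_isotopy S2 H2" "H2 0 = id" "\<forall>t\<in>{0..1}. lifts S2 p (H2 t) (H t)"
    by (rule C1_isotopy_lift[OF assms(1,2) iso H(1)])
  have "H2 1 \<in> Diff S2" using H2(1) unfolding C1_isotopy_def by simp
  then have "H2 1 \<in> Diff0 S2" unfolding Diff0_def using H2(1,2) by blast
  moreover have "lifts S2 p (H2 1) g" using H2(3) H(2) by force
  ultimately show ?thesis by (rule that)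
qed

section \<open>Distortion\<close>

lemma liminf_ratio_zero_of_le_add_const:
  fixes a b :: "nat \<Rightarrow> nat" and c :: nat
  assumes le: "\<And>n. a n \<le> b n + c"
    and lim: "liminf (\<lambda>n. ereal (real (b n) / real n)) = 0"
  shows "liminf (\<lambda>n. ereal (real (a n) / real n)) = 0"
proof (rule antisym)
  have "liminf (\<lambda>n. ereal (real (a n) / real n))
      \<le> liminf (\<lambda>n. ereal (real (b n) / real n) + ereal (real c / real n))"
  proof (rule Liminf_mono, rule always_eventually, rule allI)
    fix n
    have "real (a n) / real n \<le> (real (b n) + real c) / real n"
      using le[of n] by (intro divide_right_mono) (auto simp flip: of_nat_add)
    then show "ereal (real (a n) / real n) \<le> ereal (real (b n) / real n) + ereal (real c / real n)"
      by (simp add: add_divide_distrib)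
  qed
  also have "\<dots> \<le> liminf (\<lambda>n. ereal (real (b n) / real n)) + limsup (\<lambda>n. ereal (real c / real n))"
    by (rule ereal_liminf_limsup_add)
  also have "limsup (\<lambda>n. ereal (real c / real n)) = 0"
  proof -
    have "(\<lambda>n. ereal (real c / real n)) \<longlonglongrightarrow> ereal 0"
      by (rule tendsto_ereal[OF lim_const_over_n])
    then show ?thesis using lim_imp_Limsup[OF trivial_limit_sequentially] zero_ereal_def by metis
  qed
  finally show "liminf (\<lambda>n. ereal (real (a n) / real n)) \<le> 0" using lim by simp
  show "0 \<le> liminf (\<lambda>n. ereal (real (a n) / real n))"
    by (rule Liminf_bounded) auto
qed

theorem lemma6p4:
  fixes S S2 :: "pt set" and p f f2 :: "pt \<Rightarrow> pt"
  assumes "closed_surface S" and "closed_surface S2"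
    and "two_fold_cover S2 S p"
    and "f \<in> Diff0 S" and "f2 \<in> Diff0 S2"
    and "\<forall>x\<in>S2. p (f2 x) = f (p x)"
    and "\<exists>A. A \<subseteq> Diff0 S \<and> distortion_element S A f"
  shows "\<exists>A2. A2 \<subseteq> Diff0 S2 \<and> distortion_element S2 A2 f2"
proof -
  obtain A where A: "A \<subseteq> Diff0 S" "finite A" "f \<in> gen_group S A" "\<forall>n>0. f ^^ n \<noteq> id"
    and lim: "liminf (\<lambda>n. ereal (real (word_length S A (f ^^ n)) / real n)) = 0"
    using assms(7) unfolding distortion_element_def by blast
  have A_Diff: "A \<subseteq> Diff S" using A(1) Diff0_subset_Diff by blast
  have "\<forall>g\<in>A. \<exists>g2. g2 \<in> Diff0 S2 \<and> lifts S2 p g2 g"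
    using Diff0_lift[OF assms(2,3)] A(1) by blast
  then obtain lf where lf: "\<forall>g\<in>A. lf g \<in> Diff0 S2 \<and> lifts S2 p (lf g) g"
    by (rule bchoice[THEN exE])
  define A2 where "A2 = insert f2 (lf ` A)"
  have A2: "A2 \<subseteq> Diff0 S2" "A2 \<subseteq> Diff S2" "finite A2" "f2 \<in> A2"
    unfolding A2_def using lf assms(5) Diff0_subset_Diff A(2) by auto
  have f2: "lifts S2 p f2 f" "f2 ` S2 \<subseteq> S2"
    using assms(5,6) Diff0_subset_Diff Diff_permutes permutes_image unfolding lifts_def by blast+
  have "connected S2" using assms(2) unfolding closed_surface_def by blast
  then obtain c where "\<And>n. word_length S2 A2 (f2 ^^ n) \<le> word_length S A (f ^^ n) + c"
    using word_length_lifted_powers_bound[OF assms(3) _ A(3) A_Diff A2(2) _ A2(4) f2(1)] lf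
    unfolding A2_def by blast
  then have "liminf (\<lambda>n. ereal (real (word_length S2 A2 (f2 ^^ n)) / real n)) = 0"
    by (rule liminf_ratio_zero_of_le_add_const[OF _ lim])
  moreover have "\<forall>n>0. f2 ^^ n \<noteq> id"
  proof (intro allI impI notI)
    fix n :: nat assume "n > 0" "f2 ^^ n = id"
    moreover have "f ^^ n permutes S"
      using gen_group_permutes[OF gen_group_funpow[OF A(3)]] A_Diff Diff_permutes by blast
    ultimately show False
      using funpow_eq_id_of_lift[OF f2 two_fold_coverD(2)[OF assms(3)]] A(4) by blast
  qed
  ultimately show ?thesis
    unfolding distortion_element_def using A2 gen_group_generator[OF A2(4)] by blast
qed

end
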